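(* Let $\mathcal{F}=(I,\mathcal{A}=(A_i)_{i\in I},R,i_0,(\Delta_i,\delta_i)_{i\neq i_0})$ be an interactive family, with $A_i=(\tau_i:(\alpha_i:\mathbf{C}_i\rightharpoondown\mathbf{P}^{L_i})\looparrowright\mathbf{h}_i)$. Let $\mathbf{B}=\mathbf{C}_{i_0}$ and $M=\mathrm{Im}(rb(R))$. Define a graphical multi-dynamics $\beta$ with motor the underlying graph of $\mathbf{B}$ and parameter set $M$ by: for every object $S$ of $\mathbf{B}$, $$S^\beta=\Big\{(a_i)_{i\in I}\in S^{\alpha_{i_0}}\times\prod_{i\neq i_0}(\Delta_iS)^{\alpha_i}\ :\ \forall i\neq i_0,\ \tau_i(a_i)=\delta_i(\tau_{i_0}(a_{i_0}))\Big\},$$ and for every arrow $e:S\to T$ of $\mathbf{B}$, every $a=(a_i)_{i\in I}\in S^\beta$ and every $\mu\in M$, $e^\beta_\mu(a)$ is the set of $b=(b_i)_{i\in I}\in T^\beta$ such that (1) $\tau_{i_0}(b_{i_0})=e^{\mathbf{h}_{i_0}}(\tau_{i_0}(a_{i_0}))$, and (2) there exists $(\mathfrak{a}_i)_{i\in I}\in rb(R)^{-1}(\mu)$ such that for every $i\in I$, $\mathfrak{a}_i\rhd a_i$ and $\mathfrak{a}_i\rhd b_i$. Then $\beta$ is a sub-functorial multi-dynamics $\mathbf{C}_{i_0}\rightharpoondown\mathbf{P}^M$.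
   Context: Transitions: a transition $f:A\rightsquigarrow B$ is a map $A\to\mathcal{P}(B)$; $(g\odot f)(a)=\bigcup_{b\in f(a)}g(b)$; $u\subset v$ means pointwise inclusion; $\mathrm{Id}_A(a)=\{a\}$. Sub-functorial multi-dynamics $\alpha:\mathbf{C}\rightharpoondown\mathbf{P}^L$ ($\mathbf{C}$ small category, $L$ nonempty set): sets $S^\alpha$ for objects $S$, pairwise disjoint, and for each arrow $f:S\to T$ transitions $f^\alpha_\lambda:S^\alpha\rightsquigarrow T^\alpha$ ($\lambda\in L$) with $(\mathrm{Id}_S)^\alpha_\lambda\subset\mathrm{Id}_{S^\alpha}$ and $(g\circ f)^\alpha_\lambda\subset g^\alpha_\lambda\odot f^\alpha_\lambda$. A graphical multi-dynamics is the same data without these two conditions. $st(\alpha)=\bigcup_S S^\alpha$. Clock: a functor $\mathbf{h}:\mathbf{C}\to\mathbf{Sets}$ with $S^{\mathbf{h}}=\mathbf{h}(S)$ pairwise disjoint for distinct objects; its elements (instants) $st(\mathbf{h})=\bigcup_S S^{\mathbf h}$ are preordered by $s\le_{\mathbf h}t$ iff $t=e^{\mathbf h}(s)$ for some arrow $e$. Open sub-functorial dynamics $A=(\tau:(\alpha:\mathbf{C}\rightharpoondown\mathbf{P}^L)\looparrowright\mathbf{h})$: a sub-functorial multi-dynamics $\alpha$, a clock $\mathbf{h}$ on the same $\mathbf{C}$, and a map $\tau:st(\alpha)\to st(\mathbf{h})$ with $\tau(S^\alpha)\subset S^{\mathbf h}$ and, for every arrow $e:S\to T$, $\lambda\in L$,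 $a\in S^\alpha$ and $b\in e^\alpha_\lambda(a)$, $\tau(b)=e^{\mathbf h}(\tau(a))$. Realization of $A$: a pair $(\lambda,\mathfrak{a})$ with $\lambda\in L$ and $\mathfrak{a}$ a partial function from $st(\mathbf h)$ to $st(\alpha)$ with domain $D_{\mathfrak a}$ such that $\tau(\mathfrak a(t))=t$ for $t\in D_{\mathfrak a}$; $\mathfrak a(t)\in S^\alpha$ whenever $t\in S^{\mathbf h}\cap D_{\mathfrak a}$; and for every arrow $f:S\to T$ and $t\in S^{\mathbf h}$, if $f^{\mathbf h}(t)\in D_{\mathfrak a}$ then $t\in D_{\mathfrak a}$ and $\mathfrak a(f^{\mathbf h}(t))\in f^\alpha_\lambda(\mathfrak a(t))$. $\mathfrak a$ is the external part; $\mathcal{S}^*_{(A,\lambda)}$ denotes the set of nonempty external parts of realizations with parameter $\lambda$, and $\mathcal{S}^*_A=\bigcup_\lambda\mathcal{S}^*_{(A,\lambda)}$. $A$ is efficient if $\mathcal{S}^*_A\neq\emptyset$. $\mathfrak a\rhd a$ ("passes through the state $a$") means $\tau(a)\in D_{\mathfrak a}$ and $\mathfrak a(\tau(a))=a$. Interaction: for a family $\mathcal{A}=(A_i)_{i\in I}$ ($I\neq\emptyset$) of efficient open sub-functorial dynamics with parameter sets $L_i$ and $\mathcal{S}^*_i=\mathcal{S}^*_{A_i}$, a configuration is a family $((\sigma_i,\lambda_i))_{i\in I}$ with $\lambda_i\in L_i$ and $\sigma_i\in\mathcal{S}^*_{(A_i,\lambda_i)}$ for all $i$. An interaction $R$ is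 a nonempty set of configurations. $rb(R)$ is the binary relation from $\prod_i\mathcal{S}^*_i$ to $\prod_iL_i$ relating $(\sigma_i)_i$ to $(\lambda_i)_i$ iff $((\sigma_i,\lambda_i))_i\in R$; $\mathrm{Im}(rb(R))$ is the set of $(\lambda_i)_i$ so related to some $(\sigma_i)_i$, and $rb(R)^{-1}(\mu)$ is the set of $(\sigma_i)_i$ related to $\mu$. Synchronization of $A_1$ by $A_0$ (written $(\Delta_1,\delta_1):\mathbf h_0\Rsh\mathbf h_1$): a map $\Delta_1$ from objects of $\mathbf{C}_0$ to objects of $\mathbf{C}_1$ and a map $\delta_1:st(\mathbf h_0)\to st(\mathbf h_1)$ with $\delta_1(S^{\mathbf h_0})\subset(\Delta_1S)^{\mathbf h_1}$ for every object $S$, and $\delta_1$ monotone (either $s\le_{\mathbf h_0}t\Rightarrow\delta_1(s)\le_{\mathbf h_1}\delta_1(t)$ for all $s,t$, or $s\le_{\mathbf h_0}t\Rightarrow\delta_1(t)\le_{\mathbf h_1}\delta_1(s)$ for all $s,t$). Interactive family $(I,\mathcal A,R,i_0,(\Delta_i,\delta_i)_{i\neq i_0})$: nonempty set $I$, family $\mathcal A=(A_i)_{i\in I}$ of efficient open sub-functorial dynamics, an interaction $R$ for $\mathcal A$, an index $i_0\in I$, and synchronizations $(\Delta_i,\delta_i):\mathbf h_{i_0}\Rsh\mathbf h_i$ for $i\neq i_0$. *)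

theory Defs
  imports "HOL-Library.FuncSet"
begin

record ('o, 'm) cat =
  cObj  :: "'o set"
  cArr  :: "'m set"
  cDom  :: "'m \<Rightarrow> 'o"
  cCod  :: "'m \<Rightarrow> 'o"
  cComp :: "'m \<Rightarrow> 'm \<Rightarrow> 'm"   (* cComp C g f = g o f *)
  cId   :: "'o \<Rightarrow> 'm"

definition category :: "('o, 'm) cat \<Rightarrow> bool" where
  "category C \<longleftrightarrow>
     (\<forall>f\<in>cArr C. cDom C f \<in> cObj C \<and> cCod C f \<in> cObj C) \<and>
     (\<forall>S\<in>cObj C. cId C S \<in> cArr C \<and> cDom C (cId C S) = S \<and> cCod C (cId C S) = S) \<and>
     (\<forall>f\<in>cArr C. \<forall>g\<in>cArr C. cCod C f = cDom C g \<longrightarrow>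
        cComp C g f \<in> cArr C \<and> cDom C (cComp C g f) = cDom C f \<and> cCod C (cComp C g f) = cCod C g) \<and>
     (\<forall>f\<in>cArr C. cComp C f (cId C (cDom C f)) = f \<and> cComp C (cId C (cCod C f)) f = f) \<and>
     (\<forall>f\<in>cArr C. \<forall>g\<in>cArr C. \<forall>h\<in>cArr C. cCod C f = cDom C g \<longrightarrow> cCod C g = cDom C h \<longrightarrow>
        cComp C h (cComp C g f) = cComp C (cComp C h g) f)"

definition pairwise_disjoint_on :: "('o, 'm) cat \<Rightarrow> ('o \<Rightarrow> 'x set) \<Rightarrow> bool" where
  "pairwise_disjoint_on C X \<longleftrightarrow>
     (\<forall>S\<in>cObj C. \<forall>T\<in>cObj C. S \<noteq> T \<longrightarrow> X S \<inter> X T = {})"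

definition graphical_md ::
  "('o, 'm) cat \<Rightarrow> 'l set \<Rightarrow> ('o \<Rightarrow> 's set) \<Rightarrow> ('m \<Rightarrow> 'l \<Rightarrow> 's \<Rightarrow> 's set) \<Rightarrow> bool" where
  "graphical_md C L St Tr \<longleftrightarrow>
     category C \<and> L \<noteq> {} \<and> pairwise_disjoint_on C St \<and>
     (\<forall>e\<in>cArr C. \<forall>l\<in>L. \<forall>a\<in>St (cDom C e). Tr e l a \<subseteq> St (cCod C e))"

definition subfunctorial_md ::
  "('o, 'm) cat \<Rightarrow> 'l set \<Rightarrow> ('o \<Rightarrow> 's set) \<Rightarrow> ('m \<Rightarrow> 'l \<Rightarrow> 's \<Rightarrow> 's set) \<Rightarrow> bool" where
  "subfunctorial_md C L St Tr \<longleftrightarrow>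
     graphical_md C L St Tr \<and>
     (\<forall>S\<in>cObj C. \<forall>l\<in>L. \<forall>a\<in>St S. Tr (cId C S) l a \<subseteq> {a}) \<and>
     (\<forall>f\<in>cArr C. \<forall>g\<in>cArr C. cCod C f = cDom C g \<longrightarrow>
        (\<forall>l\<in>L. \<forall>a\<in>St (cDom C f). Tr (cComp C g f) l a \<subseteq> (\<Union>b\<in>Tr f l a. Tr g l b)))"

definition clock :: "('o, 'm) cat \<Rightarrow> ('o \<Rightarrow> 't set) \<Rightarrow> ('m \<Rightarrow> 't \<Rightarrow> 't) \<Rightarrow> bool" where
  "clock C hS hA \<longleftrightarrow>
     pairwise_disjoint_on C hS \<and>
     (\<forall>e\<in>cArr C. \<forall>t\<in>hS (cDom C e). hA e t \<in> hS (cCod C e)) \<and>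
     (\<forall>S\<in>cObj C. \<forall>t\<in>hS S. hA (cId C S) t = t) \<and>
     (\<forall>f\<in>cArr C. \<forall>g\<in>cArr C. cCod C f = cDom C g \<longrightarrow>
        (\<forall>t\<in>hS (cDom C f). hA (cComp C g f) t = hA g (hA f t)))"

definition clock_st :: "('o, 'm) cat \<Rightarrow> ('o \<Rightarrow> 't set) \<Rightarrow> 't set" where
  "clock_st C hS = (\<Union>S\<in>cObj C. hS S)"

definition clock_le :: "('o, 'm) cat \<Rightarrow> ('o \<Rightarrow> 't set) \<Rightarrow> ('m \<Rightarrow> 't \<Rightarrow> 't) \<Rightarrow> 't \<Rightarrow> 't \<Rightarrow> bool" where
  "clock_le C hS hA s t \<longleftrightarrow> (\<exists>e\<in>cArr C. s \<in> hS (cDom C e) \<and> t = hA e s)"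

record ('o, 'm, 's, 't, 'l) odyn =
  Cat  :: "('o, 'm) cat"
  Par  :: "'l set"
  St   :: "'o \<Rightarrow> 's set"
  Tr   :: "'m \<Rightarrow> 'l \<Rightarrow> 's \<Rightarrow> 's set"
  ClkS :: "'o \<Rightarrow> 't set"
  ClkA :: "'m \<Rightarrow> 't \<Rightarrow> 't"
  Tau  :: "'s \<Rightarrow> 't"

definition ostates :: "('o, 'm, 's, 't, 'l) odyn \<Rightarrow> 's set" where
  "ostates A = (\<Union>S\<in>cObj (Cat A). St A S)"

definition oinstants :: "('o, 'm, 's, 't, 'l) odyn \<Rightarrow> 't set" where
  "oinstants A = clock_st (Cat A) (ClkS A)"

definition open_dyn :: "('o, 'm, 's, 't, 'l) odyn \<Rightarrow> bool" where
  "open_dyn A \<longleftrightarrow>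
     subfunctorial_md (Cat A) (Par A) (St A) (Tr A) \<and>
     clock (Cat A) (ClkS A) (ClkA A) \<and>
     (\<forall>S\<in>cObj (Cat A). Tau A ` St A S \<subseteq> ClkS A S) \<and>
     (\<forall>e\<in>cArr (Cat A). \<forall>l\<in>Par A. \<forall>a\<in>St A (cDom (Cat A) e). \<forall>b\<in>Tr A e l a.
        Tau A b = ClkA A e (Tau A a))"

definition realization :: "('o, 'm, 's, 't, 'l) odyn \<Rightarrow> 'l \<Rightarrow> ('t \<rightharpoonup> 's) \<Rightarrow> bool" where
  "realization A l a \<longleftrightarrow>
     l \<in> Par A \<and>
     dom a \<subseteq> oinstants A \<and> ran a \<subseteq> ostates A \<and>
     (\<forall>t\<in>dom a. Tau A (the (a t)) = t) \<and>
     (\<forall>S\<in>cObj (Cat A). \<forall>t\<in>ClkS A S \<inter> dom a. the (a t) \<in> St A S) \<and>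
     (\<forall>f\<in>cArr (Cat A). \<forall>t\<in>ClkS A (cDom (Cat A) f).
        ClkA A f t \<in> dom a \<longrightarrow>
          t \<in> dom a \<and> the (a (ClkA A f t)) \<in> Tr A f l (the (a t)))"

definition ext_parts :: "('o, 'm, 's, 't, 'l) odyn \<Rightarrow> 'l \<Rightarrow> ('t \<rightharpoonup> 's) set" where
  "ext_parts A l = {a. realization A l a \<and> dom a \<noteq> {}}"

definition all_ext_parts :: "('o, 'm, 's, 't, 'l) odyn \<Rightarrow> ('t \<rightharpoonup> 's) set" where
  "all_ext_parts A = (\<Union>l\<in>Par A. ext_parts A l)"

definition efficient :: "('o, 'm, 's, 't, 'l) odyn \<Rightarrow> bool" where
  "efficient A \<longleftrightarrow> all_ext_parts A \<noteq> {}"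

definition passes :: "('o, 'm, 's, 't, 'l) odyn \<Rightarrow> ('t \<rightharpoonup> 's) \<Rightarrow> 's \<Rightarrow> bool" where
  "passes A a x \<longleftrightarrow> Tau A x \<in> dom a \<and> a (Tau A x) = Some x"

definition configuration ::
  "'i set \<Rightarrow> ('i \<Rightarrow> ('o, 'm, 's, 't, 'l) odyn) \<Rightarrow> ('i \<Rightarrow> ('t \<rightharpoonup> 's) \<times> 'l) \<Rightarrow> bool" where
  "configuration I A c \<longleftrightarrow>
     c \<in> extensional I \<and>
     (\<forall>i\<in>I. snd (c i) \<in> Par (A i) \<and> fst (c i) \<in> ext_parts (A i) (snd (c i)))"

definition interaction ::
  "'i set \<Rightarrow> ('i \<Rightarrow> ('o, 'm, 's, 't, 'l) odyn) \<Rightarrow> ('i \<Rightarrow> ('t \<rightharpoonup> 's) \<times> 'l) set \<Rightarrow> bool" where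
  "interaction I A R \<longleftrightarrow> R \<noteq> {} \<and> (\<forall>c\<in>R. configuration I A c)"

definition rb_image :: "'i set \<Rightarrow> ('i \<Rightarrow> ('t \<rightharpoonup> 's) \<times> 'l) set \<Rightarrow> ('i \<Rightarrow> 'l) set" where
  "rb_image I R = {mu. \<exists>sigma. (\<lambda>i\<in>I. (sigma i, mu i)) \<in> R \<and> sigma \<in> extensional I \<and> mu \<in> extensional I}"

definition rb_preimage :: "'i set \<Rightarrow> ('i \<Rightarrow> ('t \<rightharpoonup> 's) \<times> 'l) set \<Rightarrow> ('i \<Rightarrow> 'l) \<Rightarrow> ('i \<Rightarrow> ('t \<rightharpoonup> 's)) set" where
  "rb_preimage I R mu = {sigma. sigma \<in> extensional I \<and> (\<lambda>i\<in>I. (sigma i, mu i)) \<in> R}"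

definition synchronization ::
  "('o, 'm, 's, 't, 'l) odyn \<Rightarrow> ('o, 'm, 's, 't, 'l) odyn \<Rightarrow> ('o \<Rightarrow> 'o) \<Rightarrow> ('t \<Rightarrow> 't) \<Rightarrow> bool" where
  "synchronization A0 A1 Delta delta \<longleftrightarrow>
     (\<forall>S\<in>cObj (Cat A0). Delta S \<in> cObj (Cat A1)) \<and>
     (\<forall>t\<in>oinstants A0. delta t \<in> oinstants A1) \<and>
     (\<forall>S\<in>cObj (Cat A0). delta ` ClkS A0 S \<subseteq> ClkS A1 (Delta S)) \<and>
     ((\<forall>s\<in>oinstants A0. \<forall>t\<in>oinstants A0.
         clock_le (Cat A0) (ClkS A0) (ClkA A0) s t \<longrightarrow>
         clock_le (Cat A1) (ClkS A1) (ClkA A1) (delta s) (delta t)) \<or>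
      (\<forall>s\<in>oinstants A0. \<forall>t\<in>oinstants A0.
         clock_le (Cat A0) (ClkS A0) (ClkA A0) s t \<longrightarrow>
         clock_le (Cat A1) (ClkS A1) (ClkA A1) (delta t) (delta s)))"

definition interactive_family ::
  "'i set \<Rightarrow> ('i \<Rightarrow> ('o, 'm, 's, 't, 'l) odyn) \<Rightarrow> ('i \<Rightarrow> ('t \<rightharpoonup> 's) \<times> 'l) set \<Rightarrow> 'i \<Rightarrow>
   ('i \<Rightarrow> 'o \<Rightarrow> 'o) \<Rightarrow> ('i \<Rightarrow> 't \<Rightarrow> 't) \<Rightarrow> bool" where
  "interactive_family I A R i0 Delta delta \<longleftrightarrow>
     I \<noteq> {} \<and>
     (\<forall>i\<in>I. open_dyn (A i) \<and> efficient (A i)) \<and>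
     interaction I A R \<and>
     i0 \<in> I \<and>
     (\<forall>i\<in>I - {i0}. synchronization (A i0) (A i) (Delta i) (delta i))"

definition beta_St ::
  "'i set \<Rightarrow> ('i \<Rightarrow> ('o, 'm, 's, 't, 'l) odyn) \<Rightarrow> 'i \<Rightarrow> ('i \<Rightarrow> 'o \<Rightarrow> 'o) \<Rightarrow> ('i \<Rightarrow> 't \<Rightarrow> 't) \<Rightarrow>
   'o \<Rightarrow> ('i \<Rightarrow> 's) set" where
  "beta_St I A i0 Delta delta S =
     {a \<in> (\<Pi>\<^sub>E i\<in>I. if i = i0 then St (A i0) S else St (A i) (Delta i S)).
        \<forall>i\<in>I - {i0}. Tau (A i) (a i) = delta i (Tau (A i0) (a i0))}"

definition beta_Tr ::
  "'i set \<Rightarrow> ('i \<Rightarrow> ('o, 'm, 's, 't, 'l) odyn) \<Rightarrow> ('i \<Rightarrow> ('t \<rightharpoonup> 's) \<times> 'l) set \<Rightarrow> 'i \<Rightarrow>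
   ('i \<Rightarrow> 'o \<Rightarrow> 'o) \<Rightarrow> ('i \<Rightarrow> 't \<Rightarrow> 't) \<Rightarrow> 'm \<Rightarrow> ('i \<Rightarrow> 'l) \<Rightarrow> ('i \<Rightarrow> 's) \<Rightarrow> ('i \<Rightarrow> 's) set" where
  "beta_Tr I A R i0 Delta delta e mu a =
     {b \<in> beta_St I A i0 Delta delta (cCod (Cat (A i0)) e).
        Tau (A i0) (b i0) = ClkA (A i0) e (Tau (A i0) (a i0)) \<and>
        (\<exists>sigma\<in>rb_preimage I R mu.
           \<forall>i\<in>I. passes (A i) (sigma i) (a i) \<and> passes (A i) (sigma i) (b i))}"

end

theory Submission
  imports Defs
begin

text \<open>The only substantial axiom is sub-functoriality on composites. If realizations
  \<open>(\<sigma> i)\<close> witness a transition from \<open>a\<close> to \<open>b\<close> along \<open>g \<circ> f\<close>, the intermediate instant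
  \<open>t = f(\<tau>(a i0))\<close> lies between \<open>\<tau>(a i0)\<close> and \<open>\<tau>(b i0)\<close>. Domains of realizations are
  downward closed for the clock preorder and each \<open>\<delta> i\<close> is monotone in one direction or the
  other, so every \<open>\<sigma> i\<close> is defined at \<open>\<delta> i t\<close>; reading the \<open>\<sigma> i\<close> there gives an
  intermediate state \<open>c\<close> with \<open>a \<rightarrow> c\<close> along \<open>f\<close> and \<open>c \<rightarrow> b\<close> along \<open>g\<close>. For identities the
  clock fixes the instant, and a realization passes through at most one state per instant.\<close>

lemma passes_inj:
  assumes "passes B \<rho> x" "passes B \<rho> y" "Tau B x = Tau B y"
  shows "x = y"
  using assms by (simp add: passes_def)

lemma realization_dom_downward:
  assumes "realization B l \<rho>" "clock_le (Cat B) (ClkS B) (ClkA B) t u" "u \<in> dom \<rho>"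
  shows "t \<in> dom \<rho>"
  using assms unfolding realization_def clock_le_def by blast

lemma realization_passes_at:
  assumes "realization B l \<rho>" "S \<in> cObj (Cat B)" "t \<in> ClkS B S" "t \<in> dom \<rho>"
  shows "the (\<rho> t) \<in> St B S" "Tau B (the (\<rho> t)) = t" "passes B \<rho> (the (\<rho> t))"
  using assms by (auto simp: realization_def passes_def)

lemma synchronization_between:
  assumes "synchronization A0 A1 Delta delta"
    and "clock_le (Cat A0) (ClkS A0) (ClkA A0) s t" "clock_le (Cat A0) (ClkS A0) (ClkA A0) t u"
    and "s \<in> oinstants A0" "t \<in> oinstants A0" "u \<in> oinstants A0"
  shows "clock_le (Cat A1) (ClkS A1) (ClkA A1) (delta t) (delta u) \<or>
         clock_le (Cat A1) (ClkS A1) (ClkA A1) (delta t) (delta s)"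
  using assms unfolding synchronization_def by blast

lemma realization_dom_synchronized:
  assumes "synchronization A0 A1 Delta delta" "realization A1 l \<rho>"
    and "clock_le (Cat A0) (ClkS A0) (ClkA A0) s t" "clock_le (Cat A0) (ClkS A0) (ClkA A0) t u"
    and "s \<in> oinstants A0" "t \<in> oinstants A0" "u \<in> oinstants A0"
    and "delta s \<in> dom \<rho>" "delta u \<in> dom \<rho>"
  shows "delta t \<in> dom \<rho>"
  using synchronization_between[OF assms(1,3-7)] realization_dom_downward[OF assms(2)] assms(8,9)
  by blast

lemma rb_preimage_realization:
  assumes "interaction I A R" "\<sigma> \<in> rb_preimage I R mu" "i \<in> I"
  shows "realization (A i) (mu i) (\<sigma> i)"
  using assms by (auto simp: rb_preimage_def interaction_def configuration_def ext_parts_def)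

lemma rb_image_nonempty:
  assumes "interaction I A R"
  shows "rb_image I R \<noteq> {}"
proof -
  obtain c where c: "c \<in> R" "c \<in> extensional I"
    using assms by (auto simp: interaction_def configuration_def)
  have "(\<lambda>i\<in>I. (restrict (fst \<circ> c) I i, restrict (snd \<circ> c) I i)) = c"
    using c(2) by (auto simp: extensional_def)
  with c(1) have "restrict (snd \<circ> c) I \<in> rb_image I R"
    unfolding rb_image_def by (intro CollectI exI[of _ "restrict (fst \<circ> c) I"]) auto
  then show ?thesis by blast
qed

lemma beta_StD:
  assumes "a \<in> beta_St I A i0 Delta delta S"
  shows "a \<in> extensional I" "i0 \<in> I \<Longrightarrow> a i0 \<in> St (A i0) S"
    "i \<in> I - {i0} \<Longrightarrow> Tau (A i) (a i) = delta i (Tau (A i0) (a i0))"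
  using assms by (auto simp: beta_St_def PiE_def Pi_def)

lemma beta_St_eqI:
  assumes "a \<in> beta_St I A i0 Delta delta S" "b \<in> beta_St I A i0 Delta delta T"
    and "\<forall>i\<in>I. passes (A i) (\<sigma> i) (a i) \<and> passes (A i) (\<sigma> i) (b i)"
    and "Tau (A i0) (a i0) = Tau (A i0) (b i0)"
  shows "a = b"
proof (rule extensionalityI)
  show "a \<in> extensional I" using assms(1) by (rule beta_StD)
  show "b \<in> extensional I" using assms(2) by (rule beta_StD)
  fix i assume i: "i \<in> I"
  have "Tau (A i) (a i) = Tau (A i) (b i)"
  proof (cases "i = i0")
    case False
    with i have "i \<in> I - {i0}" by simp
    then show ?thesis using beta_StD(3)[OF assms(1)] beta_StD(3)[OF assms(2)] assms(4) by metis
  qed (use assms(4) in simp)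
  with assms(3) i show "a i = b i" by (metis passes_inj)
qed

locale interactive_system =
  fixes I A R i0 Delta delta
  assumes family: "interactive_family I A R i0 Delta delta"
begin

abbreviation "B \<equiv> Cat (A i0)"
abbreviation "StB \<equiv> beta_St I A i0 Delta delta"
abbreviation "TrB \<equiv> beta_Tr I A R i0 Delta delta"
abbreviation "le\<^sub>0 \<equiv> clock_le B (ClkS (A i0)) (ClkA (A i0))"

lemma i0_in_I: "i0 \<in> I"
  and open_dyn_master: "open_dyn (A i0)"
  and interaction: "interaction I A R"
  and synchronized: "i \<in> I - {i0} \<Longrightarrow> synchronization (A i0) (A i) (Delta i) (delta i)"
  using family by (auto simp: interactive_family_def)

lemma category_B: "category B"
  and disjoint_master: "pairwise_disjoint_on B (St (A i0))"
  using open_dyn_master by (simp_all add: open_dyn_def subfunctorial_md_def graphical_md_def)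

lemma clock_master: "clock B (ClkS (A i0)) (ClkA (A i0))"
  using open_dyn_master by (simp add: open_dyn_def)

lemma Tau_master: "S \<in> cObj B \<Longrightarrow> x \<in> St (A i0) S \<Longrightarrow> Tau (A i0) x \<in> ClkS (A i0) S"
  using open_dyn_master unfolding open_dyn_def by blast

lemma dom_cod_in_obj: "f \<in> cArr B \<Longrightarrow> cDom B f \<in> cObj B \<and> cCod B f \<in> cObj B"
  and cod_id: "S \<in> cObj B \<Longrightarrow> cCod B (cId B S) = S"
  and cod_comp: "f \<in> cArr B \<Longrightarrow> g \<in> cArr B \<Longrightarrow> cCod B f = cDom B g \<Longrightarrow>
    cCod B (cComp B g f) = cCod B g"
  using category_B by (simp_all add: category_def)

lemma instant_master: "S \<in> cObj B \<Longrightarrow> t \<in> ClkS (A i0) S \<Longrightarrow> t \<in> oinstants (A i0)"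
  by (auto simp: oinstants_def clock_st_def)

lemma beta_graphical_md: "graphical_md B (rb_image I R) StB TrB"
proof -
  have "pairwise_disjoint_on B StB"
    unfolding pairwise_disjoint_on_def
  proof (intro ballI impI equals0I)
    fix S T a assume ST: "S \<in> cObj B" "T \<in> cObj B" "S \<noteq> T" and a: "a \<in> StB S \<inter> StB T"
    then have "a i0 \<in> St (A i0) S" "a i0 \<in> St (A i0) T"
      using beta_StD(2)[OF IntD1[OF a] i0_in_I] beta_StD(2)[OF IntD2[OF a] i0_in_I] by blast+
    with ST disjoint_master show False unfolding pairwise_disjoint_on_def by blast
  qed
  then show ?thesis
    using category_B rb_image_nonempty[OF interaction]
    unfolding graphical_md_def beta_Tr_def by blast
qed

lemma beta_Tr_id:
  assumes "S \<in> cObj B" "a \<in> StB S"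
  shows "TrB (cId B S) mu a \<subseteq> {a}"
proof
  fix b assume "b \<in> TrB (cId B S) mu a"
  then obtain \<sigma> where b: "b \<in> StB S" "Tau (A i0) (b i0) = ClkA (A i0) (cId B S) (Tau (A i0) (a i0))"
    and \<sigma>: "\<forall>i\<in>I. passes (A i) (\<sigma> i) (a i) \<and> passes (A i) (\<sigma> i) (b i)"
    unfolding beta_Tr_def cod_id[OF assms(1)] by blast
  have "Tau (A i0) (a i0) \<in> ClkS (A i0) S"
    using Tau_master[OF assms(1) beta_StD(2)[OF assms(2) i0_in_I]] .
  with clock_master assms(1) have "ClkA (A i0) (cId B S) (Tau (A i0) (a i0)) = Tau (A i0) (a i0)"
    unfolding clock_def by blast
  with b(2) have "Tau (A i0) (a i0) = Tau (A i0) (b i0)" by simp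
  then show "b \<in> {a}" using beta_St_eqI[OF assms(2) b(1) \<sigma>] by simp
qed

lemma beta_St_through:
  assumes \<sigma>: "\<sigma> \<in> rb_preimage I R mu" and T: "T \<in> cObj B" "t \<in> ClkS (A i0) T"
    and dom: "t \<in> dom (\<sigma> i0)" "\<forall>i\<in>I - {i0}. delta i t \<in> dom (\<sigma> i)"
  obtains c where "c \<in> StB T" "Tau (A i0) (c i0) = t" "\<forall>i\<in>I. passes (A i) (\<sigma> i) (c i)"
proof
  define c where "c = (\<lambda>i\<in>I. if i = i0 then the (\<sigma> i0 t) else the (\<sigma> i (delta i t)))"
  note realization = rb_preimage_realization[OF interaction \<sigma>]
  have c0: "c i0 \<in> St (A i0) T" "Tau (A i0) (c i0) = t" "passes (A i0) (\<sigma> i0) (c i0)"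
    using realization_passes_at[OF realization[OF i0_in_I] T dom(1)] i0_in_I by (auto simp: c_def)
  have ci: "c i \<in> St (A i) (Delta i T) \<and> Tau (A i) (c i) = delta i t \<and> passes (A i) (\<sigma> i) (c i)"
    if i: "i \<in> I - {i0}" for i
  proof -
    have "Delta i T \<in> cObj (Cat (A i))" "delta i t \<in> ClkS (A i) (Delta i T)"
      using synchronized[OF i] T unfolding synchronization_def by blast+
    from realization_passes_at[OF realization[of i] this dom(2)[rule_format, OF i]] i
    show ?thesis by (auto simp: c_def)
  qed
  have "c \<in> extensional I" by (simp add: c_def)
  then show "c \<in> StB T"
    using c0 ci unfolding beta_St_def PiE_def Pi_def by auto
  show "Tau (A i0) (c i0) = t" by (fact c0(2))
  show "\<forall>i\<in>I. passes (A i) (\<sigma> i) (c i)" using c0(3) ci by blast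
qed

lemma beta_Tr_comp:
  assumes fg: "f \<in> cArr B" "g \<in> cArr B" "cCod B f = cDom B g" and a: "a \<in> StB (cDom B f)"
  shows "TrB (cComp B g f) mu a \<subseteq> (\<Union>c\<in>TrB f mu a. TrB g mu c)"
proof
  fix b assume "b \<in> TrB (cComp B g f) mu a"
  then obtain \<sigma> where b: "b \<in> StB (cCod B g)"
      "Tau (A i0) (b i0) = ClkA (A i0) (cComp B g f) (Tau (A i0) (a i0))"
    and \<sigma>: "\<sigma> \<in> rb_preimage I R mu" "\<forall>i\<in>I. passes (A i) (\<sigma> i) (a i) \<and> passes (A i) (\<sigma> i) (b i)"
    using cod_comp[OF fg] by (auto simp: beta_Tr_def)
  note realization = rb_preimage_realization[OF interaction \<sigma>(1)]
  have objs: "cDom B f \<in> cObj B" "cCod B f \<in> cObj B" "cCod B g \<in> cObj B"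
    using dom_cod_in_obj fg by blast+
  define s u where "s = Tau (A i0) (a i0)" and "u = Tau (A i0) (b i0)"
  define t where "t = ClkA (A i0) f s"
  have s: "s \<in> ClkS (A i0) (cDom B f)"
    unfolding s_def using Tau_master[OF objs(1) beta_StD(2)[OF a i0_in_I]] .
  have t: "t \<in> ClkS (A i0) (cCod B f)"
    using clock_master fg(1) s unfolding clock_def t_def by blast
  have "ClkA (A i0) (cComp B g f) s = ClkA (A i0) g t"
    using clock_master fg s unfolding clock_def t_def by blast
  then have u: "u = ClkA (A i0) g t" using b(2) by (simp add: s_def u_def)
  have "u \<in> ClkS (A i0) (cCod B g)" using clock_master fg t u by (auto simp: clock_def)
  then have instants: "s \<in> oinstants (A i0)" "t \<in> oinstants (A i0)" "u \<in> oinstants (A i0)"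
    using s t objs instant_master by blast+
  have le: "le\<^sub>0 s t" "le\<^sub>0 t u"
    unfolding clock_le_def using fg s t u t_def by auto
  have "u \<in> dom (\<sigma> i0)" using \<sigma>(2) i0_in_I by (auto simp: passes_def u_def)
  then have dom0: "t \<in> dom (\<sigma> i0)"
    using realization_dom_downward[OF realization[OF i0_in_I] le(2)] by blast
  have dom_sync: "\<forall>i\<in>I - {i0}. delta i t \<in> dom (\<sigma> i)"
  proof
    fix i assume i: "i \<in> I - {i0}"
    have "delta i s \<in> dom (\<sigma> i)" "delta i u \<in> dom (\<sigma> i)"
      using \<sigma>(2) i beta_StD(3)[OF a i] beta_StD(3)[OF b(1) i]
      by (auto simp: passes_def s_def u_def)
    then show "delta i t \<in> dom (\<sigma> i)"
      using realization_dom_synchronized[OF synchronized[OF i] realization[of i] le instants] i by blast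
  qed
  obtain c where c: "c \<in> StB (cCod B f)" "Tau (A i0) (c i0) = t"
    "\<forall>i\<in>I. passes (A i) (\<sigma> i) (c i)"
    using beta_St_through[OF \<sigma>(1) objs(2) t dom0 dom_sync] .
  have "c \<in> TrB f mu a"
    using c \<sigma> unfolding beta_Tr_def t_def s_def by blast
  moreover have "Tau (A i0) (b i0) = ClkA (A i0) g (Tau (A i0) (c i0))"
    using u c(2) by (simp add: u_def)
  then have "b \<in> TrB g mu c"
    using b(1) c \<sigma> fg(3) unfolding beta_Tr_def by auto
  ultimately show "b \<in> (\<Union>c\<in>TrB f mu a. TrB g mu c)" by blast
qed

end

theorem mainTheorem3:
  assumes "interactive_family I A R i0 Delta delta"
  shows "subfunctorial_md (Cat (A i0)) (rb_image I R)
           (beta_St I A i0 Delta delta) (beta_Tr I A R i0 Delta delta)"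
proof -
  interpret interactive_system I A R i0 Delta delta
    using assms by unfold_locales
  show ?thesis
    unfolding subfunctorial_md_def
  proof (intro conjI ballI impI)
    show "graphical_md B (rb_image I R) StB TrB" by (fact beta_graphical_md)
    show "TrB (cId B S) mu a \<subseteq> {a}" if "S \<in> cObj B" "a \<in> StB S" for S mu a
      using that by (rule beta_Tr_id)
    show "TrB (cComp B g f) mu a \<subseteq> (\<Union>c\<in>TrB f mu a. TrB g mu c)"
      if "f \<in> cArr B" "g \<in> cArr B" "cCod B f = cDom B g" "a \<in> StB (cDom B f)" for f g mu a
      using that by (rule beta_Tr_comp)
  qed
qed

end
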